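(* Let $n>4$. In any sparse ordering $\sigma$ of $U_n$, the position of $v_1$ is $1$ or $2$ and the position of $v_n$ is $n$ or $n-1$. Furthermore, for no $i\in[n-1]$ is $v_i$ immediately followed by $v_{i+1}$ in $\sigma$.
   Context: For $n\ge1$, $U_n$ is the tournament with vertex set $\{v_1,\dots,v_n\}$ and arc set $\{(v_{i+1},v_i): i\in[n-1]\}\cup\{(v_i,v_j): 1\le i<n,\ i+1<j\le n\}$. For an ordering of the vertices, an arc $(x,y)$ is backward if $y$ comes before $x$. An ordering is sparse if every vertex is incident to at most one backward arc. Positions in an ordering are numbered $1,\dots,n$. *)

theory Defs
  imports Main
begin

text \<open>Vertex v_i of U_n is represented by the natural number i, 1 \<le> i \<le> n.\<close>

definition U_arc :: "nat \<Rightarrow> nat \<Rightarrow> nat \<Rightarrow> bool" where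
  "U_arc n x y \<longleftrightarrow>
     (\<exists>i. 1 \<le> i \<and> i \<le> n - 1 \<and> x = i + 1 \<and> y = i) \<or>
     (1 \<le> x \<and> x < n \<and> x + 1 < y \<and> y \<le> n)"

text \<open>An ordering of the vertices is a bijection pos from {1..n} to positions {1..n}.\<close>

definition is_ordering :: "nat \<Rightarrow> (nat \<Rightarrow> nat) \<Rightarrow> bool" where
  "is_ordering n pos \<longleftrightarrow> bij_betw pos {1..n} {1..n}"

definition backward_arcs :: "nat \<Rightarrow> (nat \<Rightarrow> nat) \<Rightarrow> (nat \<times> nat) set" where
  "backward_arcs n pos = {(x, y). x \<in> {1..n} \<and> y \<in> {1..n} \<and> U_arc n x y \<and> pos y < pos x}"

definition sparse_ordering :: "nat \<Rightarrow> (nat \<Rightarrow> nat) \<Rightarrow> bool" where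
  "sparse_ordering n pos \<longleftrightarrow> is_ordering n pos \<and>
     (\<forall>v \<in> {1..n}. card {(x, y) \<in> backward_arcs n pos. x = v \<or> y = v} \<le> 1)"

end

theory Submission
  imports Defs
begin

text \<open>
  In a sparse ordering two distinct backward arcs never share a vertex. If v_1 were not among
  the first two positions, the two vertices placed before it would be out-neighbours of v_1,
  except possibly v_2; so some v_j with j >= 3 precedes v_1, and the vertex v_(j+1) (or v_3 if
  j = n) lies after v_j but points to it, giving a second backward arc at v_j. The statement
  about v_n follows by duality: v_i |-> v_(n+1-i) is an isomorphism from U_n onto its converse,
  so relabelling the vertices in this way and reversing the ordering preserves sparseness.
  Finally, if v_(i+1) immediately follows v_i, the arc from v_(i+1) to v_i is backward, and a
  vertex w with arcs v_i -> w -> v_(i+1) (namely v_(i+2) or v_(i-1)) lies outside this pair,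
  which creates a second backward arc at v_i or at v_(i+1).
\<close>

lemma U_arc_iff:
  assumes "x \<in> {1..n}" "y \<in> {1..n}"
  shows "U_arc n x y \<longleftrightarrow> x = y + 1 \<or> x + 1 < y"
  using assms unfolding U_arc_def by auto

lemma backward_arcI:
  assumes "x \<in> {1..n}" "y \<in> {1..n}" "U_arc n x y" "pos y < pos x"
  shows "(x, y) \<in> backward_arcs n pos"
  using assms unfolding backward_arcs_def by simp

lemma backward_arcs_subset: "backward_arcs n pos \<subseteq> {1..n} \<times> {1..n}"
  unfolding backward_arcs_def by auto

lemma is_orderingD:
  assumes "is_ordering n pos"
  shows "x \<in> {1..n} \<Longrightarrow> pos x \<in> {1..n}"
    and "x \<in> {1..n} \<Longrightarrow> y \<in> {1..n} \<Longrightarrow> pos x = pos y \<longleftrightarrow> x = y"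
    and "k \<in> {1..n} \<Longrightarrow> \<exists>x \<in> {1..n}. pos x = k"
proof -
  have bij: "bij_betw pos {1..n} {1..n}"
    using assms unfolding is_ordering_def .
  show "x \<in> {1..n} \<Longrightarrow> pos x \<in> {1..n}"
    using bij by (rule bij_betw_apply)
  show "x \<in> {1..n} \<Longrightarrow> y \<in> {1..n} \<Longrightarrow> pos x = pos y \<longleftrightarrow> x = y"
    using bij_betw_imp_inj_on[OF bij] by (rule inj_on_eq_iff)
  show "k \<in> {1..n} \<Longrightarrow> \<exists>x \<in> {1..n}. pos x = k"
    using bij_betw_imp_surj_on[OF bij] by (metis imageE)
qed

lemma sparse_ordering_imp_is_ordering: "sparse_ordering n pos \<Longrightarrow> is_ordering n pos"
  unfolding sparse_ordering_def by blast

lemma sparse_ordering_iff_disjoint_backward_arcs: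
  "sparse_ordering n pos \<longleftrightarrow> is_ordering n pos \<and>
     (\<forall>a b c d. (a, b) \<in> backward_arcs n pos \<longrightarrow> (c, d) \<in> backward_arcs n pos \<longrightarrow>
        {a, b} \<inter> {c, d} \<noteq> {} \<longrightarrow> (a, b) = (c, d))"
    (is "_ \<longleftrightarrow> _ \<and> ?disjoint")
proof -
  let ?inc = "\<lambda>v. {(x, y) \<in> backward_arcs n pos. x = v \<or> y = v}"
  have "finite (?inc v)" for v
    by (rule finite_subset[of _ "{1..n} \<times> {1..n}"]) (use backward_arcs_subset in auto)
  then have "card (?inc v) \<le> 1 \<longleftrightarrow> (\<forall>e \<in> ?inc v. \<forall>f \<in> ?inc v. e = f)" for v
    by (simp add: card_le_Suc0_iff_eq)
  moreover have "(\<forall>v \<in> {1..n}. \<forall>e \<in> ?inc v. \<forall>f \<in> ?inc v. e = f) \<longleftrightarrow> ?disjoint"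
  proof
    assume unique: "\<forall>v \<in> {1..n}. \<forall>e \<in> ?inc v. \<forall>f \<in> ?inc v. e = f"
    show ?disjoint
    proof (intro allI impI)
      fix a b c d
      assume ab: "(a, b) \<in> backward_arcs n pos" and cd: "(c, d) \<in> backward_arcs n pos"
        and "{a, b} \<inter> {c, d} \<noteq> {}"
      then obtain v where v: "v \<in> {a, b}" "v \<in> {c, d}"
        by blast
      then have "v \<in> {1..n}"
        using ab backward_arcs_subset by blast
      moreover have "(a, b) \<in> ?inc v" "(c, d) \<in> ?inc v"
        using ab cd v by blast+
      ultimately show "(a, b) = (c, d)"
        using unique by blast
    qed
  next
    assume disjoint: ?disjoint
    show "\<forall>v \<in> {1..n}. \<forall>e \<in> ?inc v. \<forall>f \<in> ?inc v. e = f"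
    proof (intro ballI)
      fix v e f
      assume "e \<in> ?inc v" "f \<in> ?inc v"
      then obtain a b c d where "e = (a, b)" "f = (c, d)" "v \<in> {a, b} \<inter> {c, d}"
        "(a, b) \<in> backward_arcs n pos" "(c, d) \<in> backward_arcs n pos"
        by auto
      then show "e = f"
        using disjoint by blast
    qed
  qed
  ultimately show ?thesis
    unfolding sparse_ordering_def by simp
qed

lemma sparse_ordering_backward_arcs_disjoint:
  assumes "sparse_ordering n pos"
    and "(a, b) \<in> backward_arcs n pos" "(c, d) \<in> backward_arcs n pos"
    and "(a, b) \<noteq> (c, d)"
  shows "{a, b} \<inter> {c, d} = {}"
  using assms unfolding sparse_ordering_iff_disjoint_backward_arcs by blast

definition dual_ordering :: "nat \<Rightarrow> (nat \<Rightarrow> nat) \<Rightarrow> nat \<Rightarrow> nat" where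
  "dual_ordering n pos = (\<lambda>v. n + 1 - pos (n + 1 - v))"

lemma is_ordering_dual:
  assumes "is_ordering n pos"
  shows "is_ordering n (dual_ordering n pos)"
proof -
  have mirror: "bij_betw (\<lambda>v. n + 1 - v) {1..n} {1..n}"
    by (rule bij_betw_byWitness[of _ "\<lambda>v. n + 1 - v"]) auto
  have "bij_betw pos {1..n} {1..n}"
    using assms unfolding is_ordering_def .
  from bij_betw_trans[OF bij_betw_trans[OF mirror this] mirror] show ?thesis
    unfolding is_ordering_def dual_ordering_def comp_def .
qed

lemma U_arc_dual:
  assumes "x \<in> {1..n}" "y \<in> {1..n}"
  shows "U_arc n (n + 1 - y) (n + 1 - x) \<longleftrightarrow> U_arc n x y"
  using assms by (subst (1 2) U_arc_iff) auto

lemma backward_arcs_dual: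
  assumes "is_ordering n pos"
  shows "(x, y) \<in> backward_arcs n (dual_ordering n pos) \<longleftrightarrow>
         (n + 1 - y, n + 1 - x) \<in> backward_arcs n pos"
proof (cases "x \<in> {1..n} \<and> y \<in> {1..n}")
  case True
  then have mirrored: "n + 1 - x \<in> {1..n}" "n + 1 - y \<in> {1..n}"
    by auto
  then have "pos (n + 1 - x) \<le> n" "pos (n + 1 - y) \<le> n"
    using is_orderingD(1)[OF assms] by auto
  then have "dual_ordering n pos y < dual_ordering n pos x \<longleftrightarrow> pos (n + 1 - x) < pos (n + 1 - y)"
    unfolding dual_ordering_def by linarith
  moreover have "U_arc n (n + 1 - y) (n + 1 - x) \<longleftrightarrow> U_arc n x y"
    using True U_arc_dual by blast
  ultimately show ?thesis
    using True mirrored unfolding backward_arcs_def by simp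
next
  case False
  then show ?thesis
    unfolding backward_arcs_def by auto
qed

lemma sparse_ordering_dual:
  assumes "sparse_ordering n pos"
  shows "sparse_ordering n (dual_ordering n pos)"
proof -
  have ord: "is_ordering n pos"
    using assms by (rule sparse_ordering_imp_is_ordering)
  have "(a, b) = (c, d)"
    if ab: "(a, b) \<in> backward_arcs n (dual_ordering n pos)"
      and cd: "(c, d) \<in> backward_arcs n (dual_ordering n pos)"
      and meet: "{a, b} \<inter> {c, d} \<noteq> {}" for a b c d
  proof -
    have "a \<in> {1..n}" "b \<in> {1..n}" "c \<in> {1..n}" "d \<in> {1..n}"
      using ab cd backward_arcs_subset by blast+
    moreover have "(n + 1 - b, n + 1 - a) = (n + 1 - d, n + 1 - c)"
    proof (rule ccontr)
      assume "(n + 1 - b, n + 1 - a) \<noteq> (n + 1 - d, n + 1 - c)"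
      with ab cd have "{n + 1 - b, n + 1 - a} \<inter> {n + 1 - d, n + 1 - c} = {}"
        by (intro sparse_ordering_backward_arcs_disjoint[OF assms])
          (simp_all add: backward_arcs_dual[OF ord])
      with meet show False
        by blast
    qed
    ultimately show ?thesis
      by auto
  qed
  then show ?thesis
    unfolding sparse_ordering_iff_disjoint_backward_arcs using is_ordering_dual[OF ord] by blast
qed

lemma sparse_ordering_pos_first:
  assumes "4 < n" and sparse: "sparse_ordering n pos"
  shows "pos 1 \<le> 2"
proof (rule ccontr)
  assume "\<not> pos 1 \<le> 2"
  have ord: "is_ordering n pos"
    using sparse by (rule sparse_ordering_imp_is_ordering)
  have before_first: "(1, w) \<in> backward_arcs n pos" if "w \<in> {3..n}" "pos w \<le> 2" for w
    using that \<open>\<not> pos 1 \<le> 2\<close> by (intro backward_arcI) (auto simp: U_arc_iff)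
  obtain a b where "a \<in> {1..n}" "pos a = 1" "b \<in> {1..n}" "pos b = 2"
    using is_orderingD(3)[OF ord, of 1] is_orderingD(3)[OF ord, of 2] \<open>4 < n\<close> by auto
  moreover have "a \<noteq> 1" "b \<noteq> 1" "a \<noteq> b"
    using \<open>\<not> pos 1 \<le> 2\<close> \<open>pos a = 1\<close> \<open>pos b = 2\<close> by auto
  moreover obtain j where "j \<in> {a, b}" "j \<noteq> 2"
    using \<open>a \<noteq> b\<close> by blast
  ultimately have j: "j \<in> {3..n}" "pos j \<le> 2"
    using \<open>\<not> pos 1 \<le> 2\<close> by auto
  have late: "3 \<le> pos w" if w: "w \<in> {3..n}" "w \<noteq> j" for w
  proof (rule ccontr)
    assume "\<not> 3 \<le> pos w"
    with w j have "{1, w} \<inter> {1, j} = {}"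
      by (intro sparse_ordering_backward_arcs_disjoint[OF sparse] before_first) auto
    then show False
      by blast
  qed
  \<comment> \<open>A vertex after v_j with an arc into v_j; for j = n this needs n > 4.\<close>
  define w where "w = (if j < n then j + 1 else 3)"
  have w: "w \<in> {3..n}" "w \<noteq> j" "U_arc n w j"
    using j \<open>4 < n\<close> by (auto simp: w_def U_arc_iff)
  then have "(w, j) \<in> backward_arcs n pos"
    using j late[OF w(1,2)] by (intro backward_arcI) auto
  with w j have "{w, j} \<inter> {1, j} = {}"
    by (intro sparse_ordering_backward_arcs_disjoint[OF sparse] before_first) auto
  then show False
    by blast
qed

lemma sparse_ordering_pos_last:
  assumes "4 < n" and "sparse_ordering n pos"
  shows "n - 1 \<le> pos n"
  using sparse_ordering_pos_first[OF assms(1) sparse_ordering_dual[OF assms(2)]]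
  unfolding dual_ordering_def by simp

lemma sparse_ordering_triangle:
  assumes sparse: "sparse_ordering n pos"
    and vertices: "x \<in> {1..n}" "y \<in> {1..n}" "w \<in> {1..n}" "w \<noteq> x" "w \<noteq> y"
    and arcs: "U_arc n y x" "U_arc n x w" "U_arc n w y"
  shows "pos y \<noteq> pos x + 1"
proof
  assume next_to: "pos y = pos x + 1"
  have ord: "is_ordering n pos"
    using sparse by (rule sparse_ordering_imp_is_ordering)
  have yx: "(y, x) \<in> backward_arcs n pos"
    using vertices arcs next_to by (intro backward_arcI) auto
  have "pos w \<noteq> pos x" "pos w \<noteq> pos y"
    using vertices is_orderingD(2)[OF ord] by auto
  with next_to consider "pos w < pos x" | "pos y < pos w"
    by linarith
  then show False
  proof cases
    case 1
    with vertices arcs have "{y, x} \<inter> {x, w} = {}"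
      by (intro sparse_ordering_backward_arcs_disjoint[OF sparse yx] backward_arcI) auto
    then show False
      by blast
  next
    case 2
    with vertices arcs have "{y, x} \<inter> {w, y} = {}"
      by (intro sparse_ordering_backward_arcs_disjoint[OF sparse yx] backward_arcI) auto
    then show False
      by blast
  qed
qed

theorem mainTheorem11:
  fixes n :: nat and pos :: "nat \<Rightarrow> nat"
  assumes "n > 4" and "sparse_ordering n pos"
  shows "(pos 1 = 1 \<or> pos 1 = 2) \<and> (pos n = n \<or> pos n = n - 1) \<and>
         (\<forall>i \<in> {1..n-1}. pos (i + 1) \<noteq> pos i + 1)"
proof (intro conjI ballI)
  have ord: "is_ordering n pos"
    using assms(2) by (rule sparse_ordering_imp_is_ordering)
  have "pos 1 \<in> {1..n}" "pos n \<in> {1..n}"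
    using is_orderingD(1)[OF ord] assms(1) by auto
  then show "pos 1 = 1 \<or> pos 1 = 2" "pos n = n \<or> pos n = n - 1"
    using sparse_ordering_pos_first[OF assms] sparse_ordering_pos_last[OF assms] by auto
next
  fix i
  assume "i \<in> {1..n-1}"
  then have i: "i \<in> {1..n}" "i + 1 \<in> {1..n}"
    by auto
  show "pos (i + 1) \<noteq> pos i + 1"
  proof (cases "i + 2 \<le> n")
    case True
    with i show ?thesis
      by (intro sparse_ordering_triangle[OF assms(2), where w = "i + 2"]) (simp_all add: U_arc_iff)
  next
    case False
    with i assms(1) have "i - 1 \<in> {1..n}" "i = i - 1 + 1"
      by auto
    with i show ?thesis
      by (intro sparse_ordering_triangle[OF assms(2), where w = "i - 1"]) (simp_all add: U_arc_iff)
  qed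
qed

end
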